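(* Every even weakly $\varphi^*$-practical number is practical.
   Context: $\varphi^*$ is the multiplicative function with $\varphi^*(p^k)=p^k-1$ for primes $p$ and $k\ge1$ (unitary totient). For multiplicative $f$, $S_f(n)=\sum_{d\mid n}f(d)$. Write $n=p_1^{e_1}\cdots p_k^{e_k}$ with distinct primes ordered so that $f(p_1)\le\cdots\le f(p_k)$, and let $m_i=\prod_{j=1}^{i}p_j^{e_j}$ for $0\le i<k$ ($m_0=1$); $n$ is weakly $f$-practical if $f(p_{i+1})\le S_f(m_i)+1$ for every $0\le i<k$. A positive integer $n$ is practical if every integer $m$ with $1\le m\le n$ is a sum of distinct positive divisors of $n$. *)

theory Defs
  imports "HOL-Computational_Algebra.Primes"
begin

definition unitary_totient :: "nat \<Rightarrow> nat" where
  "unitary_totient n = (\<Prod>p\<in>prime_factors n. p ^ multiplicity p n - 1)"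

definition divisor_sum :: "(nat \<Rightarrow> nat) \<Rightarrow> nat \<Rightarrow> nat" where
  "divisor_sum f n = (\<Sum>d\<in>{d. d dvd n}. f d)"

text \<open>Weakly f-practical: list the distinct primes p_1,...,p_k of n with f(p_1) <= ... <= f(p_k);
  m_i = prod_{j<=i} p_j^{e_j} (here with 0-based list indices, m for index i is the product over j < i);
  require f(p_{i+1}) <= S_f(m_i) + 1 for all i.\<close>
definition weakly_f_practical :: "(nat \<Rightarrow> nat) \<Rightarrow> nat \<Rightarrow> bool" where
  "weakly_f_practical f n \<longleftrightarrow> n \<ge> 1 \<and>
     (\<exists>ps. distinct ps \<and> set ps = prime_factors n \<and> sorted (map f ps) \<and>
        (\<forall>i<length ps. f (ps ! i) \<le>
            divisor_sum f (\<Prod>j<i. (ps ! j) ^ multiplicity (ps ! j) n) + 1))"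

definition practical :: "nat \<Rightarrow> bool" where
  "practical n \<longleftrightarrow> n > 0 \<and>
     (\<forall>m\<in>{1..n}. \<exists>D. D \<subseteq> {d. d dvd n \<and> d > 0} \<and> \<Sum>D = m)"

end

theory Submission
  imports Defs
begin

text \<open>Stewart's criterion: if the primes of \<open>n\<close> can be ordered so that each \<open>p\<^sub>i\<^sub>+\<^sub>1\<close> is at most
  \<open>\<sigma>(m\<^sub>i) + 1\<close>, then every number up to \<open>\<sigma>(n)\<close> is a sum of distinct divisors of \<open>n\<close>, so \<open>n\<close>
  is practical. For an even weakly \<open>\<phi>\<^sup>*\<close>-practical \<open>n\<close> the ordering by \<open>\<phi>\<^sup>*\<close> starts with
  \<open>p\<^sub>1 = 2\<close>, because \<open>\<phi>\<^sup>*(2) = 1\<close> is the least value of \<open>\<phi>\<^sup>*\<close> on primes. So every \<open>m\<^sub>i\<close> with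
  \<open>i \<ge> 1\<close> is even, and for even \<open>m\<close> we have \<open>S\<^sub>\<phi>\<^sub>*(m) + 1 \<le> \<sigma>(m)\<close>, since \<open>\<phi>\<^sup>*(d) \<le> d\<close> and
  \<open>\<phi>\<^sup>*(2) = 2 - 1\<close>. Thus \<open>\<phi>\<^sup>*(p\<^sub>i\<^sub>+\<^sub>1) = p\<^sub>i\<^sub>+\<^sub>1 - 1 \<le> S\<^sub>\<phi>\<^sub>*(m\<^sub>i) + 1\<close> yields Stewart's condition.\<close>

definition subset_sum_complete :: "nat set \<Rightarrow> bool" where
  "subset_sum_complete A \<longleftrightarrow> (\<forall>k \<le> \<Sum>A. \<exists>S\<subseteq>A. \<Sum>S = k)"

lemma subset_sum_complete_singleton_1: "subset_sum_complete {1}"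
  unfolding subset_sum_complete_def
proof (intro allI impI)
  fix k :: nat
  assume "k \<le> \<Sum>{1}"
  then have "k = \<Sum>{} \<or> k = \<Sum>{1::nat}" by auto
  then show "\<exists>S\<subseteq>{1}. \<Sum>S = k" by blast
qed

text \<open>Write \<open>k = q s + t\<close> with \<open>s\<close> a subset sum of \<open>C\<close> and \<open>t \<le> \<Sum>A\<close>: take \<open>s = min (k div q) (\<Sum>C)\<close>;
  then \<open>t\<close> is either \<open>k mod q < q\<close> or the excess over \<open>q \<Sum>C\<close>.\<close>
lemma subset_sum_complete_Un_scaled:
  fixes A C :: "nat set" and q :: nat
  assumes "finite A" "finite C" "subset_sum_complete A" "subset_sum_complete C"
    and "0 < q" "q \<le> \<Sum>A + 1" "A \<inter> (*) q ` C = {}"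
  shows "subset_sum_complete (A \<union> (*) q ` C)"
  unfolding subset_sum_complete_def
proof (intro allI impI)
  have sum_scaled: "\<Sum>((*) q ` T) = q * \<Sum>T" for T
    using \<open>0 < q\<close> by (simp add: sum.reindex inj_on_def sum_distrib_left)
  fix k
  assume k: "k \<le> \<Sum>(A \<union> (*) q ` C)"
  define s where "s = min (k div q) (\<Sum>C)"
  define t where "t = k - q * s"
  have "q * s \<le> q * (k div q)" by (simp add: s_def)
  also have "\<dots> \<le> k" by simp
  finally have qs: "q * s \<le> k" .
  have "t \<le> \<Sum>A"
  proof (cases "k div q \<le> \<Sum>C")
    case True
    then have "t = k mod q" by (simp add: s_def t_def minus_div_mult_eq_mod[symmetric] mult.commute)
    then show ?thesis using \<open>0 < q\<close> \<open>q \<le> \<Sum>A + 1\<close> mod_less_divisor[of q k] by linarith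
  next
    case False
    then show ?thesis
      using k assms(1,2,7) by (simp add: s_def t_def sum.union_disjoint sum_scaled)
  qed
  then obtain S where S: "S \<subseteq> A" "\<Sum>S = t"
    using \<open>subset_sum_complete A\<close> unfolding subset_sum_complete_def by blast
  have "s \<le> \<Sum>C" by (simp add: s_def)
  then obtain T where T: "T \<subseteq> C" "\<Sum>T = s"
    using \<open>subset_sum_complete C\<close> unfolding subset_sum_complete_def by blast
  have "finite S" "finite T" "S \<inter> (*) q ` T = {}"
    using S T assms(1,2,7) finite_subset by blast+
  then have "\<Sum>(S \<union> (*) q ` T) = k"
    using qs by (simp add: sum.union_disjoint sum_scaled S T t_def)
  moreover have "S \<union> (*) q ` T \<subseteq> A \<union> (*) q ` C" using S T by blast
  ultimately show "\<exists>U\<subseteq>A \<union> (*) q ` C. \<Sum>U = k" by blast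
qed

lemma divisors_mult_prime_power_Suc:
  fixes m p j :: nat
  assumes "prime p" "\<not> p dvd m"
  shows "{d. d dvd m * p ^ Suc j} = {d. d dvd m} \<union> (*) p ` {d. d dvd m * p ^ j}"
proof (intro set_eqI iffI)
  fix d
  assume "d \<in> {d. d dvd m * p ^ Suc j}"
  then have d: "d dvd m * p ^ Suc j" by simp
  show "d \<in> {d. d dvd m} \<union> (*) p ` {d. d dvd m * p ^ j}"
  proof (cases "p dvd d")
    case True
    then obtain d' where d': "d = p * d'" by blast
    then have "p * d' dvd p * (m * p ^ j)" using d by (simp add: ac_simps)
    then have "d' dvd m * p ^ j" using \<open>prime p\<close> by (simp add: prime_gt_0_nat)
    then show ?thesis using d' by auto
  next
    case False
    then have "coprime d p"
      using \<open>prime p\<close> by (metis prime_imp_coprime coprime_commute)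
    then have "coprime d (p ^ Suc j)" by simp
    then have "d dvd m" using d coprime_dvd_mult_left_iff by blast
    then show ?thesis by simp
  qed
next
  fix d
  assume "d \<in> {d. d dvd m} \<union> (*) p ` {d. d dvd m * p ^ j}"
  then show "d \<in> {d. d dvd m * p ^ Suc j}"
    by (auto simp: mult_dvd_mono dvd_mult2 ac_simps)
qed

lemma subset_sum_complete_divisors_mult_prime_power:
  fixes m p j :: nat
  assumes "m > 0" "prime p" "\<not> p dvd m"
    and "subset_sum_complete {d. d dvd m}" "p \<le> \<Sum>{d. d dvd m} + 1"
  shows "subset_sum_complete {d. d dvd m * p ^ j}"
proof (induction j)
  case 0
  then show ?case using assms(4) by simp
next
  case (Suc j)
  have "p > 0" using \<open>prime p\<close> prime_gt_0_nat by blast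
  have "subset_sum_complete ({d. d dvd m} \<union> (*) p ` {d. d dvd m * p ^ j})"
  proof (rule subset_sum_complete_Un_scaled)
    show "{d. d dvd m} \<inter> (*) p ` {d. d dvd m * p ^ j} = {}"
      using \<open>\<not> p dvd m\<close> by (auto intro: dvd_trans)
  qed (use assms Suc.IH \<open>p > 0\<close> in simp_all)
  then show ?case using divisors_mult_prime_power_Suc[OF \<open>prime p\<close> \<open>\<not> p dvd m\<close>] by simp
qed

lemma prod_lessThan_nth_eq_prod_image:
  assumes "distinct ps" "i \<le> length ps"
  shows "(\<Prod>j<i. f (ps ! j)) = (\<Prod>q\<in>(!) ps ` {..<i}. f q)"
  using assms by (subst prod.reindex) (auto intro!: inj_on_nth)

lemma prime_not_dvd_prod_other_prime_powers:
  fixes p :: nat and Q :: "nat set" and e :: "nat \<Rightarrow> nat"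
  assumes "prime p" "\<forall>q\<in>Q. prime q \<and> q \<noteq> p" "finite Q"
  shows "\<not> p dvd (\<Prod>q\<in>Q. q ^ e q)"
proof
  assume "p dvd (\<Prod>q\<in>Q. q ^ e q)"
  then obtain q where "q \<in> Q" "p dvd q ^ e q"
    using assms(1,3) by (auto simp: prime_dvd_prod_iff)
  then have "p dvd q" using \<open>prime p\<close> prime_dvd_power by blast
  then show False using assms(1,2) \<open>q \<in> Q\<close> primes_dvd_imp_eq by blast
qed

lemma subset_sum_complete_divisors_prefix_prod:
  fixes ps :: "nat list" and e :: "nat \<Rightarrow> nat"
  assumes "distinct ps" "\<forall>p\<in>set ps. prime p"
    and stewart: "\<And>i. i < length ps \<Longrightarrow>
      ps ! i \<le> \<Sum>{d. d dvd (\<Prod>j<i. ps ! j ^ e (ps ! j))} + 1"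
  shows "i \<le> length ps \<Longrightarrow> subset_sum_complete {d. d dvd (\<Prod>j<i. ps ! j ^ e (ps ! j))}"
proof (induction i)
  case 0
  have "{d::nat. d dvd 1} = {1}" by auto
  then show ?case using subset_sum_complete_singleton_1 by simp
next
  case (Suc i)
  let ?m = "\<Prod>j<i. ps ! j ^ e (ps ! j)" and ?p = "ps ! i"
  have "i < length ps" using Suc.prems by simp
  have primes: "prime (ps ! j)" if "j < length ps" for j
    using assms(2) that by simp
  have "?m > 0"
    using \<open>i < length ps\<close> by (intro prod_pos) (simp add: primes prime_gt_0_nat)
  have "ps ! j \<noteq> ?p" if "j < i" for j
    using that \<open>i < length ps\<close> \<open>distinct ps\<close> by (simp add: nth_eq_iff_index_eq)
  then have "\<not> ?p dvd (\<Prod>q\<in>(!) ps ` {..<i}. q ^ e q)"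
    using \<open>i < length ps\<close> primes by (intro prime_not_dvd_prod_other_prime_powers) auto
  moreover have "?m = (\<Prod>q\<in>(!) ps ` {..<i}. q ^ e q)"
    using \<open>i < length ps\<close> \<open>distinct ps\<close>
    by (intro prod_lessThan_nth_eq_prod_image[where f = "\<lambda>q. q ^ e q"]) simp_all
  ultimately have "\<not> ?p dvd ?m" by simp
  then have "subset_sum_complete {d. d dvd ?m * ?p ^ e ?p}"
    using \<open>i < length ps\<close>
    by (intro subset_sum_complete_divisors_mult_prime_power[OF \<open>?m > 0\<close>] primes Suc.IH stewart)
      simp_all
  then show ?case by simp
qed

lemma practical_if_subset_sum_complete_divisors:
  assumes "n > 0" "subset_sum_complete {d. d dvd n}"
  shows "practical n"
  unfolding practical_def
proof (intro conjI ballI)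
  fix m
  assume "m \<in> {1..n}"
  moreover have "n \<le> \<Sum>{d. d dvd n}" using \<open>n > 0\<close> by (intro member_le_sum) auto
  ultimately have "m \<le> \<Sum>{d. d dvd n}" by simp
  then obtain D where "D \<subseteq> {d. d dvd n}" "\<Sum>D = m"
    using assms(2) unfolding subset_sum_complete_def by blast
  moreover have "{d. d dvd n} \<subseteq> {d. d dvd n \<and> d > 0}" using \<open>n > 0\<close> by (auto intro: gr0I)
  ultimately show "\<exists>D. D \<subseteq> {d. d dvd n \<and> d > 0} \<and> \<Sum>D = m" by blast
qed (rule \<open>n > 0\<close>)

lemma unitary_totient_le: "d > 0 \<Longrightarrow> unitary_totient d \<le> d"
proof -
  assume "d > 0"
  have "unitary_totient d \<le> (\<Prod>p\<in>prime_factors d. p ^ multiplicity p d)"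
    unfolding unitary_totient_def by (rule prod_mono) auto
  also have "\<dots> = d" using \<open>d > 0\<close> by (simp add: prod_prime_factors)
  finally show ?thesis .
qed

lemma unitary_totient_prime: "prime p \<Longrightarrow> unitary_totient p = p - 1"
  by (simp add: unitary_totient_def prime_prime_factors multiplicity_self)

lemma divisor_sum_unitary_totient_less_sum_divisors:
  fixes m :: nat
  assumes "m > 0" "even m"
  shows "divisor_sum unitary_totient m + 1 \<le> \<Sum>{d. d dvd m}"
proof -
  let ?D = "{d. d dvd m} - {2}"
  have "finite {d. d dvd m}" "2 \<in> {d. d dvd m}" using assms by auto
  then have sums: "\<Sum>{d. d dvd m} = 2 + \<Sum>?D"
    "divisor_sum unitary_totient m = unitary_totient 2 + (\<Sum>d\<in>?D. unitary_totient d)"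
    unfolding divisor_sum_def by (simp_all add: sum.remove)
  have "(\<Sum>d\<in>?D. unitary_totient d) \<le> \<Sum>?D"
    by (rule sum_mono) (use \<open>m > 0\<close> in \<open>auto intro!: unitary_totient_le intro: gr0I\<close>)
  then show ?thesis using sums unitary_totient_prime[of 2] by simp
qed

lemma sorted_unitary_totient_primes_nth_0:
  fixes ps :: "nat list"
  assumes "sorted (map unitary_totient ps)" "\<forall>p\<in>set ps. prime p" "2 \<in> set ps"
  shows "ps ! 0 = 2"
proof -
  obtain j where j: "j < length ps" "ps ! j = 2" using assms(3) by (metis in_set_conv_nth)
  moreover have "0 < length ps" using j(1) by arith
  ultimately have "unitary_totient (ps ! 0) \<le> unitary_totient (ps ! j)"
    using sorted_nth_mono[OF assms(1), of 0 j] by simp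
  moreover have "prime (ps ! 0)" using assms(2) j by (cases ps) auto
  ultimately have "ps ! 0 - 1 \<le> 1"
    using j unitary_totient_prime[of 2] by (simp add: unitary_totient_prime)
  then show ?thesis using prime_ge_2_nat[OF \<open>prime (ps ! 0)\<close>] by simp
qed

lemma prime_le_sum_divisors_if_unitary_totient_le:
  fixes p m :: nat
  assumes "prime p" "m > 0" "even m" "unitary_totient p \<le> divisor_sum unitary_totient m + 1"
  shows "p \<le> \<Sum>{d. d dvd m} + 1"
  using assms divisor_sum_unitary_totient_less_sum_divisors[of m] unitary_totient_prime[of p]
  by simp

lemma even_prod_lessThan_nth_power:
  fixes ps :: "nat list" and e :: "nat \<Rightarrow> nat"
  assumes "ps ! 0 = 2" "e 2 > 0" "0 < i"
  shows "even (\<Prod>j<i. ps ! j ^ e (ps ! j))"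
proof -
  have "ps ! 0 ^ e (ps ! 0) dvd (\<Prod>j<i. ps ! j ^ e (ps ! j))"
    using \<open>0 < i\<close> by (intro dvd_prodI) auto
  then show ?thesis using assms(1,2) by (metis dvd_power dvd_trans)
qed

lemma prod_lessThan_nth_prime_factor_powers:
  fixes n :: nat
  assumes "n > 0" "distinct ps" "set ps = prime_factors n"
  shows "(\<Prod>j<length ps. ps ! j ^ multiplicity (ps ! j) n) = n"
proof -
  have "(\<Prod>j<length ps. ps ! j ^ multiplicity (ps ! j) n) = (\<Prod>p\<in>set ps. p ^ multiplicity p n)"
    using prod_lessThan_nth_eq_prod_image[where f = "\<lambda>p. p ^ multiplicity p n",
        OF \<open>distinct ps\<close> order.refl] by (simp add: lessThan_atLeast0 nth_image)
  also have "\<dots> = n" using assms(1,3) by (simp add: prod_prime_factors)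
  finally show ?thesis .
qed

theorem lemma5p1:
  fixes n :: nat
  assumes "even n" and "weakly_f_practical unitary_totient n"
  shows "practical n"
proof -
  obtain ps where "1 \<le> n" "distinct ps" and ps: "set ps = prime_factors n"
    and sorted: "sorted (map unitary_totient ps)"
    and weak: "\<And>i. i < length ps \<Longrightarrow> unitary_totient (ps ! i) \<le>
            divisor_sum unitary_totient (\<Prod>j<i. ps ! j ^ multiplicity (ps ! j) n) + 1"
    using assms(2) unfolding weakly_f_practical_def by blast
  then have "n > 0" by simp
  let ?m = "\<lambda>i. \<Prod>j<i. ps ! j ^ multiplicity (ps ! j) n"
  have primes: "\<forall>p\<in>set ps. prime p" using ps by auto
  have "2 \<in> set ps" "multiplicity 2 n > 0"
    using ps \<open>n > 0\<close> \<open>even n\<close> by (simp_all add: in_prime_factors_iff prime_multiplicity_gt_zero_iff)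
  have "ps ! 0 = 2" by (rule sorted_unitary_totient_primes_nth_0[OF sorted primes \<open>2 \<in> set ps\<close>])
  have stewart: "ps ! i \<le> \<Sum>{d. d dvd ?m i} + 1" if "i < length ps" for i
  proof (cases "i = 0")
    case False
    then show ?thesis
      using that primes weak[OF that] \<open>ps ! 0 = 2\<close> \<open>multiplicity 2 n > 0\<close>
      by (intro prime_le_sum_divisors_if_unitary_totient_le even_prod_lessThan_nth_power)
        (auto intro!: prod_pos simp: prime_gt_0_nat)
  qed (simp add: \<open>ps ! 0 = 2\<close>)
  then have "subset_sum_complete {d. d dvd ?m (length ps)}"
    by (intro subset_sum_complete_divisors_prefix_prod[where e = "\<lambda>p. multiplicity p n"]
        \<open>distinct ps\<close> primes) simp_all
  then show ?thesis
    using prod_lessThan_nth_prime_factor_powers \<open>n > 0\<close> \<open>distinct ps\<close> ps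
      practical_if_subset_sum_complete_divisors by simp
qed

end
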